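(* Let $n\ge 4$, $s_k=\sin(k\pi/n)$, and let $D_1,\dots,D_{n-1}$ be positive numbers satisfying $D_kD_{l-j}\ge D_jD_{l-k}+D_lD_{k-j}$ for all integers $1\le j<k<l\le n-1$, together with $D_1=D_{n-1}=s_1$. Let $a_k=\log(D_k/s_k)$. Then (1) $a_k\ge 0$ for all $k\in\{2,\dots,n-2\}$; (2) if $a_k>0$ for some $k\in\{2,\dots,n-2\}$, then $a_k>0$ for all $k\in\{2,\dots,n-2\}$. *)

theory Defs
  imports "HOL-Analysis.Analysis"
begin

end

theory Submission
  imports Defs
begin

text \<open>Write \<open>D\<^sub>k = b\<^sub>k s\<^sub>k\<close> with \<open>s\<^sub>k = sin (k\<pi>/n)\<close>. Only the instances \<open>j = 1, l = k + 1\<close>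
  of the hypothesis are needed: by the identity \<open>s\<^sub>k\<^sup>2 = s\<^sub>k\<^sub>-\<^sub>1 s\<^sub>k\<^sub>+\<^sub>1 + s\<^sub>1\<^sup>2\<close> they say that \<open>b\<^sub>k\<^sup>2\<close>
  dominates a proper convex combination of \<open>b\<^sub>k\<^sub>-\<^sub>1 b\<^sub>k\<^sub>+\<^sub>1\<close> and \<open>1\<close>. Since \<open>b\<^sub>1 = b\<^sub>n\<^sub>-\<^sub>1 = 1\<close>, a
  minimum principle gives \<open>b \<ge> 1\<close>, and an interior value \<open>b\<^sub>k = 1\<close> forces both neighbours to
  be \<open>1\<close>, so equality spreads to the whole range.\<close>

lemma ge_one_by_minimum_principle:
  fixes b w :: "nat \<Rightarrow> real"
  assumes "lo \<le> hi"
    and pos: "\<And>i. i \<in> {lo..hi} \<Longrightarrow> 0 < b i"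
    and lo: "1 \<le> b lo" and hi: "1 \<le> b hi"
    and w_nonneg: "\<And>k. lo < k \<Longrightarrow> k < hi \<Longrightarrow> 0 \<le> w k"
    and w_lt1: "\<And>k. lo < k \<Longrightarrow> k < hi \<Longrightarrow> w k < 1"
    and mix: "\<And>k. lo < k \<Longrightarrow> k < hi \<Longrightarrow> w k * (b (k - 1) * b (k + 1)) + (1 - w k) \<le> b k ^ 2"
    and i: "i \<in> {lo..hi}"
  shows "1 \<le> b i"
proof -
  define m where "m = Min (b ` {lo..hi})"
  have "m \<in> b ` {lo..hi}"
    unfolding m_def using \<open>lo \<le> hi\<close> by (intro Min_in) auto
  then obtain k where k: "k \<in> {lo..hi}" and bk: "b k = m" by auto
  have m_le: "m \<le> b j" if "j \<in> {lo..hi}" for j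
    unfolding m_def using that by simp
  have "1 \<le> m"
  proof (cases "lo < k \<and> k < hi")
    case True
    have "m > 0" using pos k bk by auto
    have "k - 1 \<in> {lo..hi}" "k + 1 \<in> {lo..hi}" using True by auto
    then have "m \<le> b (k - 1)" "m \<le> b (k + 1)" by (simp_all add: m_le)
    then have "m * m \<le> b (k - 1) * b (k + 1)"
      using \<open>m > 0\<close> by (intro mult_mono) auto
    then have "w k * (m * m) \<le> w k * (b (k - 1) * b (k + 1))"
      using w_nonneg True by (intro mult_left_mono) auto
    with mix[of k] True bk have "w k * m ^ 2 + (1 - w k) \<le> m ^ 2"
      by (simp add: power2_eq_square)
    then have "(1 - w k) * (1 - m ^ 2) \<le> 0" by (simp add: algebra_simps)
    then have "1 \<le> m ^ 2"
      using w_lt1[of k] True by (simp add: mult_le_0_iff)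
    then show ?thesis using \<open>m > 0\<close> power2_le_imp_le[of 1 m] by simp
  next
    case False
    then have "k = lo \<or> k = hi" using k by auto
    then show ?thesis using lo hi bk by auto
  qed
  then show ?thesis using m_le[OF i] by simp
qed

lemma eq_one_spreads_to_neighbours:
  fixes b w :: "nat \<Rightarrow> real"
  assumes "b k = 1" "1 \<le> b (k - 1)" "1 \<le> b (k + 1)" "0 < w k"
    and "w k * (b (k - 1) * b (k + 1)) + (1 - w k) \<le> b k ^ 2"
  shows "b (k - 1) = 1 \<and> b (k + 1) = 1"
proof -
  have "b (k - 1) * b (k + 1) \<le> 1"
    using assms by (simp add: algebra_simps)
  with assms(2,3) show ?thesis
    by (smt (verit) mult_le_cancel_left1 mult_le_cancel_right1)
qed

lemma eq_one_propagates:
  fixes b w :: "nat \<Rightarrow> real"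
  assumes ge1: "\<And>i. i \<in> {lo..hi} \<Longrightarrow> 1 \<le> b i"
    and w_pos: "\<And>k. lo < k \<Longrightarrow> k < hi \<Longrightarrow> 0 < w k"
    and mix: "\<And>k. lo < k \<Longrightarrow> k < hi \<Longrightarrow> w k * (b (k - 1) * b (k + 1)) + (1 - w k) \<le> b k ^ 2"
    and k: "lo < k" "k < hi" "b k = 1"
    and i: "i \<in> {lo..hi}"
  shows "b i = 1"
proof -
  have step: "b (j - 1) = 1 \<and> b (j + 1) = 1" if "lo < j" "j < hi" "b j = 1" for j
  proof -
    have "j - 1 \<in> {lo..hi}" "j + 1 \<in> {lo..hi}" using that by auto
    then show ?thesis
      using that ge1 by (intro eq_one_spreads_to_neighbours[OF _ _ _ w_pos mix]) auto
  qed
  have up: "b (k + d) = 1" if "k + d \<le> hi" for d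
    using that
  proof (induction d)
    case 0
    show ?case using k by simp
  next
    case (Suc d)
    then have "lo < k + d" "k + d < hi" "b (k + d) = 1" using k by simp_all
    then show ?case using step[of "k + d"] by simp
  qed
  have down: "b (k - d) = 1" if "lo + d \<le> k" for d
    using that
  proof (induction d)
    case 0
    show ?case using k by simp
  next
    case (Suc d)
    have "lo < k - d" "k - d < hi" using Suc.prems k by linarith+
    moreover have "b (k - d) = 1" using Suc by simp
    ultimately have "b (k - d - 1) = 1" using step[of "k - d"] by blast
    moreover have "k - d - 1 = k - Suc d" by simp
    ultimately show ?case by (simp only:)
  qed
  show ?thesis
  proof (cases "k \<le> i")
    case True
    then show ?thesis using up[of "i - k"] i by simp
  next
    case False
    then have "lo + (k - i) \<le> k" using i by auto
    then show ?thesis using down[of "k - i"] False by simp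
  qed
qed

lemma sin_squared_eq_sin_diff_mult_sin_add:
  fixes x y :: real
  shows "sin x ^ 2 = sin (x - y) * sin (x + y) + sin y ^ 2"
proof -
  have "sin (x - y) * sin (x + y) = (sin x * cos y) ^ 2 - (cos x * sin y) ^ 2"
    by (simp add: sin_add sin_diff power2_eq_square algebra_simps)
  also have "\<dots> = sin x ^ 2 - sin y ^ 2"
    by (simp add: power_mult_distrib cos_squared_eq algebra_simps)
  finally show ?thesis by simp
qed

lemma sin_multiple_pi_div_pos:
  assumes "0 < k" "k < n"
  shows "0 < sin (real k * pi / real n)"
proof (rule sin_gt_zero)
  show "0 < real k * pi / real n" using assms by simp
  show "real k * pi / real n < pi" using assms by (simp add: field_simps)
qed

lemma sin_multiple_pi_div_recurrence:
  assumes "1 \<le> k"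
  shows "sin (real k * pi / real n) ^ 2 =
    sin (real (k - 1) * pi / real n) * sin (real (k + 1) * pi / real n) + sin (pi / real n) ^ 2"
  using sin_squared_eq_sin_diff_mult_sin_add[of "real k * pi / real n" "pi / real n"] assms
  by (simp add: of_nat_diff add_divide_distrib diff_divide_distrib algebra_simps)

lemma sin_pred_multiple_pi_div:
  assumes "1 \<le> n"
  shows "sin (real (n - 1) * pi / real n) = sin (pi / real n)"
proof -
  have "real (n - 1) * pi / real n = pi - pi / real n"
    using assms by (simp add: of_nat_diff field_simps)
  then show ?thesis by simp
qed

text \<open>The instance \<open>j = 1, l = k + 1\<close> of the hypothesis, divided by \<open>s\<^sub>k\<^sup>2\<close>.\<close>

lemma normalised_three_term_inequality:
  fixes Dm Dk Dp D1 sm sk sp s1 bm bk bp :: real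
  assumes "D1 * D1 + Dp * Dm \<le> Dk * Dk"
    and "Dm = bm * sm" "Dk = bk * sk" "Dp = bp * sp" "D1 = s1"
    and "sk ^ 2 = sm * sp + s1 ^ 2" "0 < sk"
  shows "sm * sp / sk ^ 2 * (bm * bp) + (1 - sm * sp / sk ^ 2) \<le> bk ^ 2"
proof -
  have "s1 ^ 2 + sm * sp * (bm * bp) \<le> sk ^ 2 * bk ^ 2"
    using assms(1-5) by (simp add: power2_eq_square algebra_simps)
  then have "(sm * sp * (bm * bp) + s1 ^ 2) / sk ^ 2 \<le> bk ^ 2"
    using \<open>0 < sk\<close> by (simp add: divide_le_eq algebra_simps)
  moreover have "1 - sm * sp / sk ^ 2 = (sk ^ 2 - sm * sp) / sk ^ 2"
    using \<open>0 < sk\<close> by (simp add: field_simps)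
  then have "1 - sm * sp / sk ^ 2 = s1 ^ 2 / sk ^ 2"
    using assms(6) by simp
  ultimately show ?thesis by (simp add: add_divide_distrib)
qed

lemma sine_normalised_sequence:
  fixes n :: nat and D b w :: "nat \<Rightarrow> real"
  assumes n2: "2 \<le> n"
    and pos: "\<And>k. 1 \<le> k \<Longrightarrow> k \<le> n - 1 \<Longrightarrow> D k > 0"
    and ineq: "\<And>j k l. 1 \<le> j \<Longrightarrow> j < k \<Longrightarrow> k < l \<Longrightarrow> l \<le> n - 1 \<Longrightarrow>
                 D k * D (l - j) \<ge> D j * D (l - k) + D l * D (k - j)"
    and D1: "D 1 = sin (pi / real n)"
    and Dn1: "D (n - 1) = sin (pi / real n)"
    and b_def: "b = (\<lambda>i. D i / sin (real i * pi / real n))"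
    and w_def: "w = (\<lambda>k. sin (real (k - 1) * pi / real n) * sin (real (k + 1) * pi / real n)
                         / sin (real k * pi / real n) ^ 2)"
  shows "\<And>i. i \<in> {1..n-1} \<Longrightarrow> 0 < b i"
    and "b 1 = 1" and "b (n - 1) = 1"
    and "\<And>k. 1 < k \<Longrightarrow> k < n - 1 \<Longrightarrow> 0 < w k"
    and "\<And>k. 1 < k \<Longrightarrow> k < n - 1 \<Longrightarrow> w k < 1"
    and "\<And>k. 1 < k \<Longrightarrow> k < n - 1 \<Longrightarrow> w k * (b (k - 1) * b (k + 1)) + (1 - w k) \<le> b k ^ 2"
proof -
  define s where "s k = sin (real k * pi / real n)" for k
  have b_eq: "b k = D k / s k" and w_eq: "w k = s (k - 1) * s (k + 1) / s k ^ 2" for k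
    unfolding b_def w_def s_def by simp_all
  have s_pos: "0 < s k" if "1 \<le> k" "k \<le> n - 1" for k
    unfolding s_def using that n2 by (intro sin_multiple_pi_div_pos) auto
  have rec: "s k ^ 2 = s (k - 1) * s (k + 1) + s 1 ^ 2" if "1 \<le> k" for k
    unfolding s_def using sin_multiple_pi_div_recurrence[of k n] that by simp
  show "0 < b i" if "i \<in> {1..n-1}" for i
    using that pos s_pos unfolding b_eq by simp
  have "s (n - 1) = s 1" "0 < s 1"
    using sin_pred_multiple_pi_div[of n] s_pos[of 1] n2 unfolding s_def by auto
  then show "b 1 = 1" "b (n - 1) = 1"
    using D1 Dn1 unfolding b_eq s_def by auto
  fix k assume k: "1 < k" "k < n - 1"
  have s_k: "0 < s (k - 1)" "0 < s (k + 1)" "0 < s 1" "0 < s k"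
    using k by (auto intro: s_pos)
  then have "0 < s (k - 1) * s (k + 1)" by simp
  moreover have "s (k - 1) * s (k + 1) < s k ^ 2"
    using rec[of k] s_k k by simp
  ultimately show "0 < w k" "w k < 1" unfolding w_eq using s_k by (simp_all add: divide_less_eq)
  have "D 1 * D 1 + D (k + 1) * D (k - 1) \<le> D k * D k"
    using ineq[of 1 k "k + 1"] k by simp
  moreover have "D (k - 1) = b (k - 1) * s (k - 1)" "D k = b k * s k" "D (k + 1) = b (k + 1) * s (k + 1)"
    unfolding b_eq using s_k by simp_all
  moreover have "D 1 = s 1" unfolding s_def using D1 by simp
  ultimately show "w k * (b (k - 1) * b (k + 1)) + (1 - w k) \<le> b k ^ 2"
    unfolding w_eq using rec[of k] k s_k by (intro normalised_three_term_inequality) simp_all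
qed

theorem mainTheorem12:
  fixes n :: nat and D :: "nat \<Rightarrow> real"
  assumes n4: "n \<ge> 4"
    and pos: "\<And>k. 1 \<le> k \<Longrightarrow> k \<le> n - 1 \<Longrightarrow> D k > 0"
    and ineq: "\<And>j k l. 1 \<le> j \<Longrightarrow> j < k \<Longrightarrow> k < l \<Longrightarrow> l \<le> n - 1 \<Longrightarrow>
                 D k * D (l - j) \<ge> D j * D (l - k) + D l * D (k - j)"
    and D1: "D 1 = sin (pi / real n)"
    and Dn1: "D (n - 1) = sin (pi / real n)"
  shows "(\<forall>k\<in>{2..n-2}. ln (D k / sin (real k * pi / real n)) \<ge> 0) \<and>
         ((\<exists>k\<in>{2..n-2}. ln (D k / sin (real k * pi / real n)) > 0) \<longrightarrow>
          (\<forall>k\<in>{2..n-2}. ln (D k / sin (real k * pi / real n)) > 0))"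
proof -
  define b where "b = (\<lambda>i. D i / sin (real i * pi / real n))"
  define w where "w = (\<lambda>k. sin (real (k - 1) * pi / real n) * sin (real (k + 1) * pi / real n)
                         / sin (real k * pi / real n) ^ 2)"
  have "2 \<le> n" using n4 by simp
  note seq = sine_normalised_sequence[OF this pos ineq D1 Dn1 b_def w_def]
  have ge1: "1 \<le> b i" if "i \<in> {1..n-1}" for i
    using ge_one_by_minimum_principle[OF _ seq(1) _ _ _ seq(5,6) that] seq(2,3,4) n4
    by (simp add: less_imp_le)
  have gt1: "1 < b i" if "i \<in> {2..n-2}" and "\<exists>k\<in>{2..n-2}. 1 < b k" for i
  proof (rule ccontr)
    assume "\<not> 1 < b i"
    then have "b i = 1" using ge1[of i] that(1) by auto
    moreover have "1 < i" "i < n - 1" using that(1) n4 by auto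
    ultimately have "b k = 1" if "k \<in> {1..n-1}" for k
      using eq_one_propagates[OF ge1 seq(4,6) \<open>1 < i\<close> \<open>i < n - 1\<close> \<open>b i = 1\<close> that] by blast
    with that(2) show False by fastforce
  qed
  have "ln (D i / sin (real i * pi / real n)) = ln (b i)" for i
    unfolding b_def by simp
  moreover have "{2..n-2} \<subseteq> {1..n-1}" by auto
  ultimately show ?thesis
    using ge1 gt1 seq(1) by (auto simp: ln_gt_zero_iff subset_iff)
qed

end
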